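(* Let $N\ge 2$ be an integer and $a>0$ real. Let $H=H^{(N)}(a)$ be the real $N\times N$ tridiagonal matrix with $H_{nn}=a+2n-1$, $H_{n,n+1}=-n$, $H_{n+1,n}=-(a+n)$, all other entries zero. Write $D_n(a)=\prod_{j=1}^{n-1}(a+j)$ (so $D_1(a)=1$). Let $\Theta_0$ be the diagonal matrix with entries $(\Theta_0)_{nn}=(n-1)!/D_n(a)$, $n=1,\dots,N$. Let $\mathcal P_1=\mathcal P_1^{(N)}(a)$ be the real symmetric tridiagonal $N\times N$ matrix with $(\mathcal P_1)_{11}=0$, $$(\mathcal P_1)_{nn}=-\frac{2(n-1)\,(n-1)!}{D_n(a)}\quad(n=2,\dots,N),\qquad (\mathcal P_1)_{n,n+1}=(\mathcal P_1)_{n+1,n}=\frac{n!}{D_n(a)}\quad(n=1,\dots,N-1),$$ and all other entries zero. Then $H^\dagger\mathcal P_1=\mathcal P_1H$. Consequently, for every real $\alpha$ the tridiagonal matrix $\Theta_1(a,\alpha)=\Theta_0+\alpha\mathcal P_1$ satisfies $H^\dagger\Theta_1=\Theta_1H$, and it is a positive definite metric for $H$ whenever $|\alpha|$ is sufficiently small.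
   Context: $H^\dagger$ is the conjugate transpose. A metric for $H$ is a positive definite Hermitian matrix $\Theta$ with $H^\dagger\Theta=\Theta H$. The entries of $\mathcal P_1$ do not depend on $N$ (apart from the truncation). *)

theory Defs
  imports "Jordan_Normal_Form.Matrix"
begin

text \<open>Matrices are indexed from 0: entry (i,j) corresponds to the paper's entry (i+1,j+1).\<close>

definition Dn :: "real \<Rightarrow> nat \<Rightarrow> real" where
  "Dn a n = (\<Prod>j = 1..<n. a + real j)"

definition Hmat :: "nat \<Rightarrow> real \<Rightarrow> real mat" where
  "Hmat N a = mat N N (\<lambda>(i, j).
     let n = i + 1; m = j + 1 in
     if m = n then a + 2 * real n - 1
     else if m = n + 1 then - real n
     else if n = m + 1 then - (a + real m)
     else 0)"

definition Theta0 :: "nat \<Rightarrow> real \<Rightarrow> real mat" where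
  "Theta0 N a = mat N N (\<lambda>(i, j).
     let n = i + 1 in
     if i = j then fact (n - 1) / Dn a n else 0)"

definition P1 :: "nat \<Rightarrow> real \<Rightarrow> real mat" where
  "P1 N a = mat N N (\<lambda>(i, j).
     let n = i + 1; m = j + 1 in
     if m = n then (if n = 1 then 0 else - (2 * real (n - 1) * fact (n - 1)) / Dn a n)
     else if m = n + 1 then fact n / Dn a n
     else if n = m + 1 then fact m / Dn a m
     else 0)"

definition Theta1 :: "nat \<Rightarrow> real \<Rightarrow> real \<Rightarrow> real mat" where
  "Theta1 N a \<alpha> = Theta0 N a + \<alpha> \<cdot>\<^sub>m P1 N a"

text \<open>Real matrices: the conjugate transpose is the transpose.\<close>

definition pos_def_hermitian :: "real mat \<Rightarrow> bool" where
  "pos_def_hermitian T \<longleftrightarrow> square_mat T \<and> transpose_mat T = T \<and>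
     (\<forall>v \<in> carrier_vec (dim_row T). v \<noteq> 0\<^sub>v (dim_row T) \<longrightarrow> v \<bullet> (T *\<^sub>v v) > 0)"

definition is_metric :: "real mat \<Rightarrow> real mat \<Rightarrow> bool" where
  "is_metric H T \<longleftrightarrow> dim_row T = dim_row H \<and> pos_def_hermitian T \<and>
     transpose_mat H * T = T * H"

end

theory Submission
  imports Defs
begin

text \<open>The diagonal weights \<open>\<theta>(n) = (n-1)!/D\<^sub>n(a)\<close> of \<open>\<Theta>\<^sub>0\<close> satisfy the detailed balance relation
  \<open>\<theta>(n+1) H(n+1,n) = \<theta>(n) H(n,n+1)\<close>, so \<open>\<Theta>\<^sub>0 H\<close> is symmetric, which for symmetric \<open>\<Theta>\<^sub>0\<close>
  means \<open>H\<^sup>T \<Theta>\<^sub>0 = \<Theta>\<^sub>0 H\<close>. Comparing entries shows \<open>P\<^sub>1 = (a+1) \<Theta>\<^sub>0 - \<Theta>\<^sub>0 H\<close>, and the relation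
  \<open>H\<^sup>T T = T H\<close> is preserved by linear combinations and by \<open>T \<mapsto> T H\<close>. Positivity: the quadratic
  form of the positive diagonal matrix \<open>\<Theta>\<^sub>0\<close> is bounded below by \<open>m |v|\<^sup>2\<close> with \<open>m > 0\<close>, while that
  of \<open>P\<^sub>1\<close> is bounded by \<open>C |v|\<^sup>2\<close>; hence \<open>\<Theta>\<^sub>0 + \<alpha> P\<^sub>1\<close> is positive definite once \<open>|\<alpha>| C < m\<close>.\<close>

lemma intertwiner_mult_right:
  fixes H T :: "'a :: comm_ring mat"
  assumes "H \<in> carrier_mat n n" "T \<in> carrier_mat n n" "transpose_mat H * T = T * H"
  shows "transpose_mat H * (T * H) = (T * H) * H"
  using assms by (metis assoc_mult_mat transpose_carrier_mat)

lemma intertwiner_add: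
  fixes H A B :: "'a :: comm_ring mat"
  assumes "H \<in> carrier_mat n n" "A \<in> carrier_mat n n" "B \<in> carrier_mat n n"
    "transpose_mat H * A = A * H" "transpose_mat H * B = B * H"
  shows "transpose_mat H * (A + B) = (A + B) * H"
  using assms by (simp add: mult_add_distrib_mat[of _ n n] add_mult_distrib_mat[of _ n n])

lemma intertwiner_minus:
  fixes H A B :: "'a :: comm_ring mat"
  assumes "H \<in> carrier_mat n n" "A \<in> carrier_mat n n" "B \<in> carrier_mat n n"
    "transpose_mat H * A = A * H" "transpose_mat H * B = B * H"
  shows "transpose_mat H * (A - B) = (A - B) * H"
  using assms by (simp add: mult_minus_distrib_mat[of _ n n] minus_mult_distrib_mat[of _ n n])

lemma intertwiner_smult:
  fixes H A :: "'a :: comm_ring mat"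
  assumes "H \<in> carrier_mat n n" "A \<in> carrier_mat n n" "transpose_mat H * A = A * H"
  shows "transpose_mat H * (c \<cdot>\<^sub>m A) = (c \<cdot>\<^sub>m A) * H"
  using assms by (simp add: mult_smult_distrib[of _ n n] mult_smult_assoc_mat[of _ n n])

lemma intertwiner_iff_symmetric:
  fixes H T :: "'a :: comm_ring mat"
  assumes "H \<in> carrier_mat n n" "T \<in> carrier_mat n n" "transpose_mat T = T"
  shows "transpose_mat H * T = T * H \<longleftrightarrow> transpose_mat (T * H) = T * H"
  using assms by (metis transpose_mult)

lemma diagonal_mat_mult_index:
  assumes "diagonal_mat D" "D \<in> carrier_mat n n" "A \<in> carrier_mat n m" "i < n" "j < m"
  shows "(D * A) $$ (i, j) = D $$ (i, i) * A $$ (i, j)"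
proof -
  have "(D * A) $$ (i, j) = (\<Sum>k \<in> {0..<n}. D $$ (i, k) * A $$ (k, j))"
    using assms(2-5) by (simp add: scalar_prod_def)
  also have "\<dots> = D $$ (i, i) * A $$ (i, j)"
    using assms(1,2,4) by (subst sum.remove[of _ i]) (auto simp: diagonal_mat_def intro!: sum.neutral)
  finally show ?thesis .
qed

lemma quadratic_form_eq_sum:
  assumes "A \<in> carrier_mat n n" "v \<in> carrier_vec n"
  shows "v \<bullet> (A *\<^sub>v v) = (\<Sum>i<n. \<Sum>j<n. v $ i * A $$ (i, j) * v $ j)"
  using assms by (simp add: scalar_prod_def lessThan_atLeast0 sum_distrib_left mult.assoc)

lemma scalar_prod_self_eq_sum:
  fixes v :: "real vec"
  shows "v \<in> carrier_vec n \<Longrightarrow> v \<bullet> v = (\<Sum>i<n. (v $ i)\<^sup>2)"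
  unfolding scalar_prod_def power2_eq_square by (simp add: lessThan_atLeast0)

lemma scalar_prod_self_pos:
  fixes v :: "real vec"
  assumes "v \<in> carrier_vec n" "v \<noteq> 0\<^sub>v n"
  shows "v \<bullet> v > 0"
proof -
  obtain i where i: "i < n" "v $ i \<noteq> 0" using assms by (metis eq_vecI carrier_vecD index_zero_vec)
  have "0 < (v $ i)\<^sup>2" using i by simp
  also have "\<dots> \<le> (\<Sum>k<n. (v $ k)\<^sup>2)" using i by (intro member_le_sum) auto
  finally show ?thesis using scalar_prod_self_eq_sum[OF assms(1)] by simp
qed

lemma abs_mult_index_le_scalar_prod_self:
  fixes v :: "real vec"
  assumes "v \<in> carrier_vec n" "i < n" "j < n"
  shows "\<bar>v $ i * v $ j\<bar> \<le> v \<bullet> v"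
proof -
  have "2 * \<bar>v $ i * v $ j\<bar> \<le> (v $ i)\<^sup>2 + (v $ j)\<^sup>2"
    using sum_squares_bound[of "\<bar>v $ i\<bar>" "\<bar>v $ j\<bar>"] by (simp add: abs_mult)
  also have "\<dots> \<le> 2 * (\<Sum>k<n. (v $ k)\<^sup>2)"
    using member_le_sum[of i "{..<n}" "\<lambda>k. (v $ k)\<^sup>2"]
      member_le_sum[of j "{..<n}" "\<lambda>k. (v $ k)\<^sup>2"] assms(2,3) by simp
  finally show ?thesis using scalar_prod_self_eq_sum[OF assms(1)] by simp
qed

lemma abs_quadratic_form_le:
  fixes A :: "real mat"
  assumes "A \<in> carrier_mat n n" "v \<in> carrier_vec n"
  shows "\<bar>v \<bullet> (A *\<^sub>v v)\<bar> \<le> (\<Sum>i<n. \<Sum>j<n. \<bar>A $$ (i, j)\<bar>) * (v \<bullet> v)"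
proof -
  have "\<bar>v \<bullet> (A *\<^sub>v v)\<bar> \<le> (\<Sum>i<n. \<Sum>j<n. \<bar>v $ i * A $$ (i, j) * v $ j\<bar>)"
    unfolding quadratic_form_eq_sum[OF assms]
    by (rule order_trans[OF sum_abs]) (intro sum_mono sum_abs)
  also have "\<dots> \<le> (\<Sum>i<n. \<Sum>j<n. \<bar>A $$ (i, j)\<bar> * (v \<bullet> v))"
  proof (intro sum_mono)
    fix i j assume "i \<in> {..<n}" "j \<in> {..<n}"
    then have "\<bar>A $$ (i, j)\<bar> * \<bar>v $ i * v $ j\<bar> \<le> \<bar>A $$ (i, j)\<bar> * (v \<bullet> v)"
      using abs_mult_index_le_scalar_prod_self[OF assms(2)] by (intro mult_left_mono) auto
    then show "\<bar>v $ i * A $$ (i, j) * v $ j\<bar> \<le> \<bar>A $$ (i, j)\<bar> * (v \<bullet> v)"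
      by (simp add: abs_mult ac_simps)
  qed
  finally show ?thesis by (simp add: sum_distrib_right)
qed

lemma diagonal_mat_quadratic_form_ge:
  fixes A :: "real mat"
  assumes "diagonal_mat A" "A \<in> carrier_mat n n" "v \<in> carrier_vec n"
    and "\<And>i. i < n \<Longrightarrow> m \<le> A $$ (i, i)"
  shows "m * (v \<bullet> v) \<le> v \<bullet> (A *\<^sub>v v)"
proof -
  have "v \<bullet> (A *\<^sub>v v) = (\<Sum>i<n. A $$ (i, i) * (v $ i)\<^sup>2)"
    unfolding quadratic_form_eq_sum[OF assms(2,3)]
    using assms(1,2) by (intro sum.cong refl, subst sum.remove[of _ i for i])
      (auto simp: diagonal_mat_def power2_eq_square intro!: sum.neutral)
  moreover have "m * (v \<bullet> v) = (\<Sum>i<n. m * (v $ i)\<^sup>2)"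
    by (simp add: scalar_prod_self_eq_sum[OF assms(3)] sum_distrib_left)
  ultimately show ?thesis using assms(4) by (auto intro!: sum_mono mult_right_mono)
qed

lemma diagonal_mat_coercive:
  fixes A :: "real mat"
  assumes "diagonal_mat A" "A \<in> carrier_mat n n" "\<And>i. i < n \<Longrightarrow> A $$ (i, i) > 0"
  shows "\<exists>m>0. \<forall>v \<in> carrier_vec n. m * (v \<bullet> v) \<le> v \<bullet> (A *\<^sub>v v)"
proof -
  define m where "m = Min (insert 1 ((\<lambda>i. A $$ (i, i)) ` {..<n}))"
  have "m > 0" unfolding m_def using assms(3) by (subst Min_gr_iff) auto
  moreover have "m \<le> A $$ (i, i)" if "i < n" for i unfolding m_def using that by (intro Min_le) auto
  ultimately show ?thesis using diagonal_mat_quadratic_form_ge[OF assms(1,2)] by blast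
qed

lemma pos_def_hermitian_perturbation:
  fixes T P :: "real mat"
  assumes T: "T \<in> carrier_mat n n" "transpose_mat T = T"
    and P: "P \<in> carrier_mat n n" "transpose_mat P = P"
    and coercive: "m > 0" "\<forall>v \<in> carrier_vec n. m * (v \<bullet> v) \<le> v \<bullet> (T *\<^sub>v v)"
  shows "\<exists>\<epsilon>>0. \<forall>\<alpha>. \<bar>\<alpha>\<bar> < \<epsilon> \<longrightarrow> pos_def_hermitian (T + \<alpha> \<cdot>\<^sub>m P)"
proof -
  define C where "C = (\<Sum>i<n. \<Sum>j<n. \<bar>P $$ (i, j)\<bar>)"
  have "C \<ge> 0" unfolding C_def by (intro sum_nonneg) auto
  have "pos_def_hermitian (T + \<alpha> \<cdot>\<^sub>m P)" if \<alpha>: "\<bar>\<alpha>\<bar> < m / (C + 1)" for \<alpha>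
  proof -
    have "\<bar>\<alpha>\<bar> * C < m"
    proof -
      have "\<bar>\<alpha>\<bar> * C \<le> \<bar>\<alpha>\<bar> * (C + 1)" by (simp add: mult_left_mono)
      also have "\<dots> < m" using \<alpha> \<open>C \<ge> 0\<close> by (simp add: pos_less_divide_eq mult.commute)
      finally show ?thesis .
    qed
    have TP: "T + \<alpha> \<cdot>\<^sub>m P \<in> carrier_mat n n" using T P by simp
    have "v \<bullet> ((T + \<alpha> \<cdot>\<^sub>m P) *\<^sub>v v) > 0" if v: "v \<in> carrier_vec n" "v \<noteq> 0\<^sub>v n" for v
    proof -
      have "\<bar>\<alpha> * (v \<bullet> (P *\<^sub>v v))\<bar> \<le> \<bar>\<alpha>\<bar> * (C * (v \<bullet> v))"
        unfolding abs_mult C_def using abs_quadratic_form_le[OF P(1) v(1)] by (rule mult_left_mono) simp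
      also have "\<dots> < m * (v \<bullet> v)"
        using \<open>\<bar>\<alpha>\<bar> * C < m\<close> scalar_prod_self_pos[OF v] by (simp flip: mult.assoc)
      also have "\<dots> \<le> v \<bullet> (T *\<^sub>v v)" using coercive(2) v(1) by blast
      finally have "0 < v \<bullet> (T *\<^sub>v v) + \<alpha> * (v \<bullet> (P *\<^sub>v v))" by linarith
      also have "\<dots> = v \<bullet> ((T + \<alpha> \<cdot>\<^sub>m P) *\<^sub>v v)"
        unfolding quadratic_form_eq_sum[OF TP v(1)] quadratic_form_eq_sum[OF T(1) v(1)]
          quadratic_form_eq_sum[OF P(1) v(1)] sum_distrib_left sum.distrib[symmetric]
        using T(1) P(1) by (intro sum.cong) (auto simp: algebra_simps)
      finally show ?thesis .
    qed
    moreover have "transpose_mat (T + \<alpha> \<cdot>\<^sub>m P) = T + \<alpha> \<cdot>\<^sub>m P"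
    proof -
      have "P $$ (j, i) = P $$ (i, j)" if "i < n" "j < n" for i j
        using arg_cong[OF P(2), of "\<lambda>A. A $$ (i, j)"] P(1) that by simp
      then have "transpose_mat (\<alpha> \<cdot>\<^sub>m P) = \<alpha> \<cdot>\<^sub>m P"
        using P(1) by (intro eq_matI) auto
      then show ?thesis using T P by (simp add: transpose_add[of _ n n])
    qed
    ultimately show ?thesis using T P unfolding pos_def_hermitian_def by auto
  qed
  moreover have "m / (C + 1) > 0" using \<open>C \<ge> 0\<close> \<open>m > 0\<close> by simp
  ultimately show ?thesis by blast
qed

lemma Dn_Suc_Suc: "Dn a (Suc (Suc n)) = Dn a (Suc n) * (a + real (Suc n))"
  unfolding Dn_def by (simp add: prod.atLeastLessThan_Suc)

lemma Dn_pos: "a > 0 \<Longrightarrow> Dn a n > 0"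
  unfolding Dn_def by (rule prod_pos) auto

definition theta0 :: "real \<Rightarrow> nat \<Rightarrow> real" where
  "theta0 a i = fact i / Dn a (Suc i)"

lemma theta0_pos: "a > 0 \<Longrightarrow> theta0 a i > 0"
  by (simp add: theta0_def Dn_pos)

lemma theta0_Suc:
  assumes "a > 0"
  shows "(a + real (Suc i)) * theta0 a (Suc i) = real (Suc i) * theta0 a i"
proof -
  have "a + real (Suc i) \<noteq> 0" using assms by simp
  then show ?thesis by (simp add: theta0_def Dn_Suc_Suc)
qed

lemma dim_Hmat [simp]: "dim_row (Hmat N a) = N" "dim_col (Hmat N a) = N"
  and dim_Theta0 [simp]: "dim_row (Theta0 N a) = N" "dim_col (Theta0 N a) = N"
  and dim_P1 [simp]: "dim_row (P1 N a) = N" "dim_col (P1 N a) = N"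
  by (simp_all add: Hmat_def Theta0_def P1_def)

lemma Hmat_carrier [simp]: "Hmat N a \<in> carrier_mat N N"
  and Theta0_carrier [simp]: "Theta0 N a \<in> carrier_mat N N"
  and P1_carrier [simp]: "P1 N a \<in> carrier_mat N N"
  by (simp_all add: carrier_matI)

lemma Hmat_index:
  "i < N \<Longrightarrow> j < N \<Longrightarrow> Hmat N a $$ (i, j) =
    (if j = i then a + 2 * real i + 1 else if j = Suc i then - real (Suc i)
     else if i = Suc j then - (a + real (Suc j)) else 0)"
  by (simp add: Hmat_def)

lemma Theta0_index:
  "i < N \<Longrightarrow> j < N \<Longrightarrow> Theta0 N a $$ (i, j) = (if i = j then theta0 a i else 0)"
  by (simp add: Theta0_def theta0_def)

lemma P1_index:
  "i < N \<Longrightarrow> j < N \<Longrightarrow> P1 N a $$ (i, j) =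
    (if j = i then - 2 * real i * theta0 a i else if j = Suc i then real (Suc i) * theta0 a i
     else if i = Suc j then real (Suc j) * theta0 a j else 0)"
  by (simp add: P1_def theta0_def Let_def)

lemma Theta0_diagonal: "diagonal_mat (Theta0 N a)"
  by (simp add: diagonal_mat_def Theta0_def)

lemma Theta0_symmetric: "transpose_mat (Theta0 N a) = Theta0 N a"
  by (rule eq_matI) (auto simp: Theta0_def)

lemma P1_symmetric: "transpose_mat (P1 N a) = P1 N a"
  by (rule eq_matI) (auto simp: P1_def Let_def)

lemma Theta0_mult_Hmat_index:
  "i < N \<Longrightarrow> j < N \<Longrightarrow> (Theta0 N a * Hmat N a) $$ (i, j) = theta0 a i * Hmat N a $$ (i, j)"
  by (subst diagonal_mat_mult_index[OF Theta0_diagonal Theta0_carrier Hmat_carrier])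
    (simp_all add: Theta0_index)

lemma Theta0_mult_Hmat_symmetric:
  assumes "a > 0"
  shows "transpose_mat (Theta0 N a * Hmat N a) = Theta0 N a * Hmat N a"
proof (rule eq_matI)
  fix i j assume "i < dim_row (Theta0 N a * Hmat N a)" "j < dim_col (Theta0 N a * Hmat N a)"
  then have ij: "i < N" "j < N" by simp_all
  have "theta0 a j * Hmat N a $$ (j, i) = theta0 a i * Hmat N a $$ (i, j)"
    using ij theta0_Suc[OF assms, of i] theta0_Suc[OF assms, of j]
    by (auto simp: Hmat_index algebra_simps)
  moreover have "transpose_mat (Theta0 N a * Hmat N a) $$ (i, j) = (Theta0 N a * Hmat N a) $$ (j, i)"
    using ij by simp
  ultimately show "transpose_mat (Theta0 N a * Hmat N a) $$ (i, j) = (Theta0 N a * Hmat N a) $$ (i, j)"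
    by (simp only: Theta0_mult_Hmat_index[OF ij] Theta0_mult_Hmat_index[OF ij(2,1)])
qed auto

lemma Theta0_intertwines_Hmat:
  "a > 0 \<Longrightarrow> transpose_mat (Hmat N a) * Theta0 N a = Theta0 N a * Hmat N a"
  by (simp add: intertwiner_iff_symmetric[of _ N] Theta0_symmetric Theta0_mult_Hmat_symmetric)

lemma P1_eq_Theta0_Hmat:
  assumes "a > 0"
  shows "P1 N a = (a + 1) \<cdot>\<^sub>m Theta0 N a - Theta0 N a * Hmat N a"
proof (rule eq_matI)
  fix i j assume "i < dim_row ((a + 1) \<cdot>\<^sub>m Theta0 N a - Theta0 N a * Hmat N a)"
    "j < dim_col ((a + 1) \<cdot>\<^sub>m Theta0 N a - Theta0 N a * Hmat N a)"
  then have ij: "i < N" "j < N" by simp_all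
  have "P1 N a $$ (i, j) = (a + 1) * Theta0 N a $$ (i, j) - theta0 a i * Hmat N a $$ (i, j)"
    using ij theta0_Suc[OF assms, of j] by (auto simp: P1_index Theta0_index Hmat_index algebra_simps)
  then show "P1 N a $$ (i, j) = ((a + 1) \<cdot>\<^sub>m Theta0 N a - Theta0 N a * Hmat N a) $$ (i, j)"
    using ij by (simp del: index_mult_mat(1) add: Theta0_mult_Hmat_index)
qed auto

theorem lemma2:
  fixes N :: nat and a :: real
  assumes "N \<ge> 2" and "a > 0"
  shows "transpose_mat (Hmat N a) * P1 N a = P1 N a * Hmat N a
    \<and> (\<forall>\<alpha>::real. transpose_mat (Hmat N a) * Theta1 N a \<alpha> = Theta1 N a \<alpha> * Hmat N a)
    \<and> (\<exists>\<epsilon>>0. \<forall>\<alpha>::real. \<bar>\<alpha>\<bar> < \<epsilon> \<longrightarrow> is_metric (Hmat N a) (Theta1 N a \<alpha>))"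
proof -
  note Theta0 = Theta0_intertwines_Hmat[OF assms(2), of N]
  have P1: "transpose_mat (Hmat N a) * P1 N a = P1 N a * Hmat N a"
    unfolding P1_eq_Theta0_Hmat[OF assms(2)]
    by (intro intertwiner_minus[of _ N] intertwiner_smult[of _ N] intertwiner_mult_right[of _ N] Theta0)
      (simp_all add: mult_carrier_mat[OF Theta0_carrier Hmat_carrier])
  have Theta1: "transpose_mat (Hmat N a) * Theta1 N a \<alpha> = Theta1 N a \<alpha> * Hmat N a" for \<alpha>
    unfolding Theta1_def by (intro intertwiner_add[of _ N] intertwiner_smult[of _ N] Theta0 P1) simp_all
  have "\<exists>m>0. \<forall>v \<in> carrier_vec N. m * (v \<bullet> v) \<le> v \<bullet> (Theta0 N a *\<^sub>v v)"
    by (rule diagonal_mat_coercive[OF Theta0_diagonal Theta0_carrier])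
      (simp add: Theta0_index theta0_pos[OF assms(2)])
  then obtain m where "m > 0" "\<forall>v \<in> carrier_vec N. m * (v \<bullet> v) \<le> v \<bullet> (Theta0 N a *\<^sub>v v)"
    by blast
  then obtain \<epsilon> where "\<epsilon> > 0" "\<forall>\<alpha>. \<bar>\<alpha>\<bar> < \<epsilon> \<longrightarrow> pos_def_hermitian (Theta1 N a \<alpha>)"
    using pos_def_hermitian_perturbation[OF Theta0_carrier Theta0_symmetric P1_carrier P1_symmetric]
    unfolding Theta1_def by blast
  then have "\<forall>\<alpha>. \<bar>\<alpha>\<bar> < \<epsilon> \<longrightarrow> is_metric (Hmat N a) (Theta1 N a \<alpha>)"
    using Theta1 by (simp add: is_metric_def Theta1_def)
  then show ?thesis using P1 Theta1 \<open>\<epsilon> > 0\<close> by blast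
qed

end
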